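(* Let $M\ge 1$ be an integer and let $\rho_1>\rho_2>\dots>\rho_M>0$. Let $(a,b)\subset\mathbb R$ be a bounded interval. For $\varepsilon>0$ and $u\colon\varepsilon\mathbb Z\to\mathbb R$ with $u(x)=0$ for all $x\in\varepsilon\mathbb Z\setminus(a,b)$, write $u_k=u(\varepsilon k)$ and define $$ F_\varepsilon(u)=\sum_{k\in\mathbb Z}\varepsilon\,\biggl|\frac1\varepsilon\Bigl(\sum_{j=1}^M (u_{k+j}-u_k)\rho_j-\sum_{j=1}^M (u_{k-j+1}-u_k)\rho_j\Bigr)\biggr|^2 . $$ Then there exists a constant $\Lambda>0$, independent of $\varepsilon$ and $u$, such that $$ F_\varepsilon(u)\ \ge\ \Lambda\sum_{k\in\mathbb Z}\varepsilon\,\Bigl|\frac{u_{k+1}-u_k}{\varepsilon}\Bigr|^2 $$ for all such $u$ and all $0<\varepsilon<\frac{1}{2M}$.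
   Context: The quantity inside the absolute value equals the scaled discrete nonlocal gradient $\frac1\varepsilon\bigl(-\sum_{i=1}^M\rho_i u_{k+1-i}+\sum_{i=1}^M\rho_i u_{k+i}\bigr)$. Only finitely many terms of the sums are nonzero since $u$ vanishes outside $(a,b)$. *)

theory Defs
  imports "HOL-Analysis.Analysis"
begin

text \<open>The discrete nonlocal energy F_eps(u), with u given by its values u_k = u(eps k), k in Z.
  The sum over Z is an unconditional (infinite) sum; for admissible u only finitely many terms are nonzero.\<close>
definition F_eps :: "nat \<Rightarrow> (nat \<Rightarrow> real) \<Rightarrow> real \<Rightarrow> (int \<Rightarrow> real) \<Rightarrow> real" where
  "F_eps M rho eps u =
     (\<Sum>\<^sub>\<infinity>k::int. eps * \<bar>(1 / eps) *
        ((\<Sum>j=1..M. (u (k + int j) - u k) * rho j)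
         - (\<Sum>j=1..M. (u (k - int j + 1) - u k) * rho j))\<bar>^2)"

definition grad_energy :: "real \<Rightarrow> (int \<Rightarrow> real) \<Rightarrow> real" where
  "grad_energy eps u = (\<Sum>\<^sub>\<infinity>k::int. eps * \<bar>(u (k + 1) - u k) / eps\<bar>^2)"

end

theory Submission
  imports Defs
begin

text \<open>
  Put d_k = u_(k+1) - u_k and g_k = sum_j rho_j (u_(k+j) - u_(k+1-j)), so that eps F_eps(u) = sum_k g_k^2.
  With the autocorrelation R_i = sum_k u_k u_(k+i), shift invariance gives
  T_j := sum_k (u_(k+j) - u_k)^2 = 2 R_0 - 2 R_j and sum_k d_k g_k = sum_j rho_j (T_j - T_(j-1)).
  Summing by parts, the strict decrease of rho and T_j >= 0 yield
  sum_k d_k g_k >= delta T_1 = delta sum_k d_k^2, where delta = rho_1 - rho_2 (delta = rho_1 if M = 1);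
  expanding sum_k (g_k - delta d_k)^2 >= 0 then gives sum_k g_k^2 >= delta^2 sum_k d_k^2.
  So Lambda = delta^2 works.
\<close>

lemma infsum_eq_sum_if_vanishing_outside:
  fixes f :: "'a \<Rightarrow> real"
  assumes "finite S" "\<And>k. k \<notin> S \<Longrightarrow> f k = 0"
  shows "(\<Sum>\<^sub>\<infinity>k. f k) = sum f S"
proof -
  have "(\<Sum>\<^sub>\<infinity>k. f k) = infsum f S"
    by (rule infsum_cong_neutral) (use assms in auto)
  then show ?thesis using assms by simp
qed

lemma sum_sq_ge_of_sum_mult_ge:
  fixes d g :: "'a \<Rightarrow> real"
  assumes "0 \<le> \<delta>" and "\<delta> * (\<Sum>k\<in>K. (d k)\<^sup>2) \<le> (\<Sum>k\<in>K. d k * g k)"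
  shows "\<delta>\<^sup>2 * (\<Sum>k\<in>K. (d k)\<^sup>2) \<le> (\<Sum>k\<in>K. (g k)\<^sup>2)"
proof -
  have "0 \<le> (\<Sum>k\<in>K. (g k - \<delta> * d k)\<^sup>2)" by (rule sum_nonneg) simp
  also have "\<dots> = (\<Sum>k\<in>K. (g k)\<^sup>2) - 2 * \<delta> * (\<Sum>k\<in>K. d k * g k) + \<delta>\<^sup>2 * (\<Sum>k\<in>K. (d k)\<^sup>2)"
    by (simp add: power2_eq_square algebra_simps sum.distrib sum_subtractf sum_distrib_left)
  also have "\<dots> \<le> (\<Sum>k\<in>K. (g k)\<^sup>2) - 2 * \<delta> * (\<delta> * (\<Sum>k\<in>K. (d k)\<^sup>2)) + \<delta>\<^sup>2 * (\<Sum>k\<in>K. (d k)\<^sup>2)"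
    using assms by (simp add: mult_left_mono)
  finally show ?thesis by (simp add: power2_eq_square)
qed

lemma sum_mult_diff_by_parts:
  fixes r T :: "nat \<Rightarrow> real"
  shows "(\<Sum>j=1..Suc n. r j * (T j - T (j - 1)))
         = (\<Sum>j=1..n. (r j - r (Suc j)) * T j) + r (Suc n) * T (Suc n) - r 1 * T 0"
  by (induction n) (simp_all add: algebra_simps)

definition first_gap :: "nat \<Rightarrow> (nat \<Rightarrow> real) \<Rightarrow> real" where
  "first_gap M r = (if M = 1 then r 1 else r 1 - r 2)"

lemma first_gap_pos:
  assumes "M \<ge> 1" and "\<And>i j. 1 \<le> i \<Longrightarrow> i < j \<Longrightarrow> j \<le> M \<Longrightarrow> r i > r j" and "r M > 0"
  shows "first_gap M r > 0"
  using assms(2)[of 1 2] assms unfolding first_gap_def by (cases "M = 1") auto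

lemma sum_mult_diff_ge_first_gap:
  fixes r T :: "nat \<Rightarrow> real"
  assumes "M \<ge> 1" and dec: "\<And>i j. 1 \<le> i \<Longrightarrow> i < j \<Longrightarrow> j \<le> M \<Longrightarrow> r i > r j"
    and "r M > 0" and "T 0 = 0" and T_nonneg: "\<And>j. 1 \<le> j \<Longrightarrow> j \<le> M \<Longrightarrow> T j \<ge> 0"
  shows "(\<Sum>j=1..M. r j * (T j - T (j - 1))) \<ge> first_gap M r * T 1"
proof -
  obtain n where n: "M = Suc n" using assms(1) by (cases M) auto
  have by_parts: "(\<Sum>j=1..M. r j * (T j - T (j - 1))) = (\<Sum>j=1..n. (r j - r (Suc j)) * T j) + r M * T M"
    using sum_mult_diff_by_parts[of r T n] \<open>T 0 = 0\<close> n by simp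
  have last: "r M * T M \<ge> 0" using assms T_nonneg[of M] by simp
  show ?thesis
  proof (cases "n = 0")
    case True then show ?thesis using by_parts n \<open>T 0 = 0\<close> by (simp add: first_gap_def)
  next
    case False
    have "(\<Sum>j=2..n. (r j - r (Suc j)) * T j) \<ge> 0"
      using dec T_nonneg n by (intro sum_nonneg mult_nonneg_nonneg) (auto simp: less_imp_le)
    moreover have "(\<Sum>j=1..n. (r j - r (Suc j)) * T j) = (r 1 - r 2) * T 1 + (\<Sum>j=2..n. (r j - r (Suc j)) * T j)"
      using False by (simp add: sum.atLeast_Suc_atMost numeral_2_eq_2)
    ultimately show ?thesis using by_parts last False n by (simp add: first_gap_def)
  qed
qed

definition autocorr :: "(int \<Rightarrow> real) \<Rightarrow> int \<Rightarrow> real" where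
  "autocorr u i = (\<Sum>\<^sub>\<infinity>k. u k * u (k + i))"

lemma infsum_shift_mult_eq_autocorr:
  "(\<Sum>\<^sub>\<infinity>k. u (k + a) * u (k + b)) = autocorr u (b - a)"
proof -
  have "bij_betw (\<lambda>k. k + a) UNIV UNIV"
    by (rule bij_betwI[where g="\<lambda>k. k - a"]) auto
  then have "(\<Sum>\<^sub>\<infinity>k. (\<lambda>m. u m * u (m + (b - a))) (k + a)) = autocorr u (b - a)"
    unfolding autocorr_def by (rule infsum_reindex_bij_betw)
  then show ?thesis by (simp add: algebra_simps)
qed

lemma autocorr_uminus: "autocorr u (- i) = autocorr u i"
  using infsum_shift_mult_eq_autocorr[of u i 0]
  by (simp add: autocorr_def mult.commute)

context
  fixes u :: "int \<Rightarrow> real" and K :: "int set" and r :: int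
  assumes finite_window: "finite K"
    and vanishing_outside_window: "\<And>k c. k \<notin> K \<Longrightarrow> \<bar>c\<bar> \<le> r \<Longrightarrow> u (k + c) = 0"
begin

lemma window_sum_shift_mult:
  assumes "\<bar>a\<bar> \<le> r"
  shows "(\<Sum>k\<in>K. u (k + a) * u (k + b)) = autocorr u (b - a)"
  using infsum_eq_sum_if_vanishing_outside[OF finite_window, of "\<lambda>k. u (k + a) * u (k + b)"]
    vanishing_outside_window assms infsum_shift_mult_eq_autocorr[of u a b]
  by simp

lemma window_sum_shift_diff_sq:
  assumes "\<bar>j\<bar> \<le> r"
  shows "(\<Sum>k\<in>K. (u (k + j) - u k)\<^sup>2) = 2 * autocorr u 0 - 2 * autocorr u j"
proof -
  have "(\<Sum>k\<in>K. (u (k + j) - u k)\<^sup>2) = (\<Sum>k\<in>K. u (k + j) * u (k + j))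
      - 2 * (\<Sum>k\<in>K. u (k + j) * u (k + 0)) + (\<Sum>k\<in>K. u (k + 0) * u (k + 0))"
    by (simp add: power2_eq_square algebra_simps sum.distrib sum_subtractf sum_distrib_left)
  then show ?thesis
    using window_sum_shift_mult[of j j] window_sum_shift_mult[of j 0] window_sum_shift_mult[of 0 0]
      autocorr_uminus[of u j] assms
    by simp
qed

lemma window_sum_diff_mult_sym_diff:
  assumes "1 \<le> r"
  shows "(\<Sum>k\<in>K. (u (k + 1) - u k) * (u (k + j) - u (k + 1 - j)))
         = 2 * autocorr u (j - 1) - 2 * autocorr u j"
proof -
  have "(\<Sum>k\<in>K. (u (k + 1) - u k) * (u (k + j) - u (k + 1 - j)))
      = (\<Sum>k\<in>K. u (k + 1) * u (k + j)) - (\<Sum>k\<in>K. u (k + 1) * u (k + (1 - j)))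
        - (\<Sum>k\<in>K. u (k + 0) * u (k + j)) + (\<Sum>k\<in>K. u (k + 0) * u (k + (1 - j)))"
    by (simp add: algebra_simps sum.distrib sum_subtractf)
  then show ?thesis
    using window_sum_shift_mult[of 1 j] window_sum_shift_mult[of 1 "1 - j"]
      window_sum_shift_mult[of 0 j] window_sum_shift_mult[of 0 "1 - j"]
      autocorr_uminus[of u j] autocorr_uminus[of u "j - 1"] assms
    by simp
qed

end

lemma finite_support_imp_window:
  fixes u :: "int \<Rightarrow> 'a::zero"
  assumes "finite {k. u k \<noteq> 0}"
  shows "\<exists>K. finite K \<and> (\<forall>k c. k \<notin> K \<longrightarrow> \<bar>c\<bar> \<le> r \<longrightarrow> u (k + c) = 0)"
proof (intro exI conjI allI impI)
  let ?K = "\<Union>c\<in>{-r..r}. (\<lambda>k. k - c) ` {k. u k \<noteq> 0}"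
  show "finite ?K" using assms by simp
  fix k c assume "k \<notin> ?K" "\<bar>c\<bar> \<le> r"
  then show "u (k + c) = 0" by force
qed

lemma infsum_nonlocal_gradient_sq_ge:
  fixes u :: "int \<Rightarrow> real" and rho :: "nat \<Rightarrow> real"
  assumes "finite {k. u k \<noteq> 0}"
    and "M \<ge> 1" and "\<And>i j. 1 \<le> i \<Longrightarrow> i < j \<Longrightarrow> j \<le> M \<Longrightarrow> rho i > rho j" and "rho M > 0"
  shows "first_gap M rho ^ 2 * (\<Sum>\<^sub>\<infinity>k. (u (k + 1) - u k)\<^sup>2)
         \<le> (\<Sum>\<^sub>\<infinity>k. (\<Sum>j=1..M. rho j * (u (k + int j) - u (k + 1 - int j)))\<^sup>2)"
proof -
  obtain K where K: "finite K" "\<And>k c. k \<notin> K \<Longrightarrow> \<bar>c\<bar> \<le> int M \<Longrightarrow> u (k + c) = 0"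
    using finite_support_imp_window[OF assms(1), of "int M"] by blast
  define d where "d k = u (k + 1) - u k" for k
  define g where "g k = (\<Sum>j=1..M. rho j * (u (k + int j) - u (k + 1 - int j)))" for k
  define T where "T j = 2 * autocorr u 0 - 2 * autocorr u (int j)" for j
  have T_sum: "T j = (\<Sum>k\<in>K. (u (k + int j) - u k)\<^sup>2)" if "j \<le> M" for j
    using window_sum_shift_diff_sq[where u=u and r="int M" and j="int j", OF K] that by (simp add: T_def)
  have "(\<Sum>k\<in>K. d k * g k) = (\<Sum>j=1..M. rho j * (\<Sum>k\<in>K. d k * (u (k + int j) - u (k + 1 - int j))))"
    unfolding g_def by (simp add: sum_distrib_left mult.left_commute sum.swap[of _ K])
  also have "\<dots> = (\<Sum>j=1..M. rho j * (T j - T (j - 1)))"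
    using window_sum_diff_mult_sym_diff[where u=u and r="int M", OF K] \<open>M \<ge> 1\<close>
    by (intro sum.cong) (auto simp: d_def T_def of_nat_diff)
  also have "\<dots> \<ge> first_gap M rho * T 1"
    using T_sum by (intro sum_mult_diff_ge_first_gap assms(2-4)) (auto simp: T_def intro: sum_nonneg)
  finally have "first_gap M rho * (\<Sum>k\<in>K. (d k)\<^sup>2) \<le> (\<Sum>k\<in>K. d k * g k)"
    using T_sum[of 1] \<open>M \<ge> 1\<close> by (simp add: d_def)
  then have "first_gap M rho ^ 2 * (\<Sum>k\<in>K. (d k)\<^sup>2) \<le> (\<Sum>k\<in>K. (g k)\<^sup>2)"
    using first_gap_pos[where r=rho, OF assms(2-4)] by (intro sum_sq_ge_of_sum_mult_ge) auto
  moreover have "(\<Sum>\<^sub>\<infinity>k. (d k)\<^sup>2) = (\<Sum>k\<in>K. (d k)\<^sup>2)"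
    using K \<open>M \<ge> 1\<close> K(2)[of _ 0] by (intro infsum_eq_sum_if_vanishing_outside) (auto simp: d_def)
  moreover have "(\<Sum>\<^sub>\<infinity>k. (g k)\<^sup>2) = (\<Sum>k\<in>K. (g k)\<^sup>2)"
    using K(2)[of _ "int _"] K(2)[of _ "1 - int _"]
    by (intro infsum_eq_sum_if_vanishing_outside K) (auto simp: g_def algebra_simps intro!: sum.neutral)
  ultimately show ?thesis by (simp add: d_def g_def)
qed

lemma finite_support_if_vanishing_outside_interval:
  fixes u :: "int \<Rightarrow> real"
  assumes "eps > 0" and "\<forall>k. eps * real_of_int k \<notin> {a<..<b} \<longrightarrow> u k = 0"
  shows "finite {k. u k \<noteq> 0}"
proof (rule finite_subset)
  show "{k. u k \<noteq> 0} \<subseteq> {\<lfloor>a / eps\<rfloor>..\<lceil>b / eps\<rceil>}"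
  proof
    fix k assume "k \<in> {k. u k \<noteq> 0}"
    then have "a / eps < k" "k < b / eps"
      using assms by (auto simp: field_simps)
    then show "k \<in> {\<lfloor>a / eps\<rfloor>..\<lceil>b / eps\<rceil>}"
      by (simp add: floor_le_iff le_ceiling_iff)
  qed
qed simp

lemma mult_abs_div_sq: "(eps::real) * \<bar>x / eps\<bar>\<^sup>2 = x\<^sup>2 / eps"
  by (cases "eps = 0") (simp_all add: power2_eq_square field_simps)

lemma infsum_div_const: "(\<Sum>\<^sub>\<infinity>k. f k / c) = (\<Sum>\<^sub>\<infinity>k. f k) / (c::real)"
  unfolding divide_inverse by (rule infsum_cmult_left')

lemma F_eps_eq_infsum_div:
  "F_eps M rho eps u = (\<Sum>\<^sub>\<infinity>k. (\<Sum>j=1..M. rho j * (u (k + int j) - u (k + 1 - int j)))\<^sup>2) / eps"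
proof -
  have nonlocal_diff: "(\<Sum>j=1..M. (u (k + int j) - u k) * rho j) - (\<Sum>j=1..M. (u (k - int j + 1) - u k) * rho j)
        = (\<Sum>j=1..M. rho j * (u (k + int j) - u (k + 1 - int j)))" for k
    by (simp add: sum_subtractf[symmetric] algebra_simps)
  show ?thesis
    by (simp only: F_eps_def nonlocal_diff times_divide_eq_left mult_1 mult_abs_div_sq infsum_div_const)
qed

lemma grad_energy_eq_infsum_div:
  "grad_energy eps u = (\<Sum>\<^sub>\<infinity>k. (u (k + 1) - u k)\<^sup>2) / eps"
  by (simp only: grad_energy_def mult_abs_div_sq infsum_div_const)

theorem theorem4p1:
  fixes M :: nat and rho :: "nat \<Rightarrow> real" and a b :: real
  assumes "M \<ge> 1"
    and "\<And>i j. 1 \<le> i \<Longrightarrow> i < j \<Longrightarrow> j \<le> M \<Longrightarrow> rho i > rho j"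
    and "rho M > 0"
  shows "\<exists>\<Lambda>>0. \<forall>eps u. 0 < eps \<longrightarrow> eps < 1 / (2 * real M) \<longrightarrow>
           (\<forall>k::int. eps * real_of_int k \<notin> {a<..<b} \<longrightarrow> u k = 0) \<longrightarrow>
           F_eps M rho eps u \<ge> \<Lambda> * grad_energy eps u"
proof (intro exI[of _ "first_gap M rho ^ 2"] conjI allI impI)
  show "first_gap M rho ^ 2 > 0" using first_gap_pos[where r=rho, OF assms] by simp
  fix eps :: real and u :: "int \<Rightarrow> real"
  assume "0 < eps" and "\<forall>k. eps * real_of_int k \<notin> {a<..<b} \<longrightarrow> u k = 0"
  then have "finite {k. u k \<noteq> 0}" by (rule finite_support_if_vanishing_outside_interval)
  from infsum_nonlocal_gradient_sq_ge[where rho=rho, OF this assms] \<open>0 < eps\<close>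
  show "first_gap M rho ^ 2 * grad_energy eps u \<le> F_eps M rho eps u"
    unfolding F_eps_eq_infsum_div grad_energy_eq_infsum_div by (simp add: divide_right_mono)
qed

end
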